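(* Let $d\ge1$, let $H,A\subset\mathbb{R}^d$ be nonempty, let $R>0$ and $\Delta$ be reals with $d(H,A)\ge R\ge\Delta\ge0$, and let $0\le s\le d$. Then $$\mathcal{H}^s(T_\Delta A)\ge\left(\frac{R-\Delta}{R}\right)^s\mathcal{H}^s(A),$$ with the convention $0^0:=0$ (relevant when $s=0$ and $R=\Delta$).
   Context: $\mathcal{H}^s$ denotes the $s$-dimensional outer Hausdorff measure on $\mathbb{R}^d$. $d(\cdot,\cdot)$ is Euclidean distance, $d(x,H)=\inf_{z\in H}|x-z|$ and $d(H,A)=\inf_{x\in A}d(x,H)$. Let $\bar H$ be the closure of $H$; for each $x$ let $\pi(x)\in\bar H$ be a point with $|x-\pi(x)|=d(x,H)$ (any one if several). For $\Delta\ge0$, $T_\Delta x:=x+\Delta\frac{\pi(x)-x}{|\pi(x)-x|}$ if $d(x,H)>\Delta$ and $T_\Delta x:=\pi(x)$ if $d(x,H)\le\Delta$. *)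

theory Defs
  imports "HOL-Analysis.Analysis"
begin

definition hcontrib :: "real \<Rightarrow> 'a::metric_space set \<Rightarrow> ennreal" where
  "hcontrib s U = (if U = {} then 0 else if s = 0 then 1 else ennreal (diameter U powr s))"

definition hausdorff_pre :: "real \<Rightarrow> real \<Rightarrow> 'a::metric_space set \<Rightarrow> ennreal" where
  "hausdorff_pre s \<delta> A =
     (INF U \<in> {U :: nat \<Rightarrow> 'a set. A \<subseteq> (\<Union>i. U i) \<and> (\<forall>i. bounded (U i) \<and> diameter (U i) \<le> \<delta>)}.
        (\<Sum>i. hcontrib s (U i)))"

text \<open>s-dimensional (unnormalised) outer Hausdorff measure.\<close>
definition hausdorff_outer :: "real \<Rightarrow> 'a::metric_space set \<Rightarrow> ennreal" where
  "hausdorff_outer s A = (SUP \<delta> \<in> {0<..}. hausdorff_pre s \<delta> A)"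

definition setdist_HA :: "'a::metric_space set \<Rightarrow> 'a set \<Rightarrow> real" where
  "setdist_HA H A = (INF x \<in> A. infdist x H)"

text \<open>The map T_Delta, relative to a chosen nearest-point map pi.\<close>
definition T_map :: "('a::real_normed_vector \<Rightarrow> 'a) \<Rightarrow> 'a set \<Rightarrow> real \<Rightarrow> 'a \<Rightarrow> 'a" where
  "T_map \<pi> H \<Delta> x = (if infdist x H > \<Delta> then x + (\<Delta> / norm (\<pi> x - x)) *\<^sub>R (\<pi> x - x) else \<pi> x)"

end

theory Submission
  imports Defs
begin

text \<open>A map f with k * dist x y \<le> dist (f x) (f y) on A lets every cover of f ` A be pulled back
  to a cover of A whose pieces are smaller by the factor k, so H^s(f ` A) \<ge> k^s H^s(A).
  For T_\<Delta> this holds with k = (R - \<Delta>) / R: writing T x = x + (\<Delta> / a) (p - x) with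
  a = |x - p| \<ge> R the distance to H, the fact that p is at least as close to x as the
  nearest point q of y (and symmetrically) controls the cross terms, giving
  <T x - T y, x - y> \<ge> ((R - \<Delta>) / R) |x - y|^2, and Cauchy-Schwarz finishes.\<close>

lemma expanding_map_bounded_diameter:
  fixes f :: "'a::metric_space \<Rightarrow> 'b::metric_space"
  assumes "k > 0" "bounded U" "f ` V \<subseteq> U"
    and expand: "\<And>x y. x \<in> V \<Longrightarrow> y \<in> V \<Longrightarrow> k * dist x y \<le> dist (f x) (f y)"
  shows "bounded V" "k * diameter V \<le> diameter U"
proof -
  have dist_le: "dist x y \<le> diameter U / k" if "x \<in> V" "y \<in> V" for x y
  proof -
    have "k * dist x y \<le> diameter U"
      using expand[OF that] diameter_bounded_bound[OF \<open>bounded U\<close>] that assms(3) by fastforce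
    then show ?thesis using \<open>k > 0\<close> by (simp add: field_simps)
  qed
  show "bounded V"
    unfolding bounded_def using dist_le by blast
  have "diameter V \<le> diameter U / k"
  proof (cases "V = {}")
    case False
    then show ?thesis
      unfolding diameter_def[of V] using dist_le by (auto intro!: cSUP_least)
  qed (use diameter_ge_0[OF \<open>bounded U\<close>] \<open>k > 0\<close> in simp)
  then show "k * diameter V \<le> diameter U"
    using \<open>k > 0\<close> by (simp add: field_simps)
qed

lemma hcontrib_scaled_le:
  assumes "k > 0" "s \<ge> 0" "bounded V" "V \<noteq> {} \<Longrightarrow> U \<noteq> {}"
    and diam: "k * diameter V \<le> diameter U"
  shows "ennreal (k powr s) * hcontrib s V \<le> hcontrib s U"
proof (cases "V = {} \<or> s = 0")
  case False
  have "k powr s * diameter V powr s = (k * diameter V) powr s"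
    using \<open>k > 0\<close> diameter_ge_0[OF \<open>bounded V\<close>] by (simp add: powr_mult)
  also have "\<dots> \<le> diameter U powr s"
    using assms diameter_ge_0[OF \<open>bounded V\<close>] by (intro powr_mono2) auto
  finally show ?thesis
    using False assms(4) \<open>k > 0\<close> by (simp add: hcontrib_def ennreal_mult[symmetric] ennreal_leI)
qed (use assms in \<open>auto simp: hcontrib_def\<close>)

lemma hausdorff_pre_image_ge:
  fixes f :: "'a::metric_space \<Rightarrow> 'b::metric_space"
  assumes "k > 0" "s \<ge> 0"
    and expand: "\<And>x y. x \<in> A \<Longrightarrow> y \<in> A \<Longrightarrow> k * dist x y \<le> dist (f x) (f y)"
  shows "ennreal (k powr s) * hausdorff_pre s \<delta> A \<le> hausdorff_pre s (k * \<delta>) (f ` A)"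
  unfolding hausdorff_pre_def[of s "k * \<delta>"]
proof (rule INF_greatest, safe)
  fix U :: "nat \<Rightarrow> 'b set"
  assume cover: "f ` A \<subseteq> (\<Union>i. U i)"
    and bounded: "\<forall>i. bounded (U i) \<and> diameter (U i) \<le> k * \<delta>"
  define V where "V i = {x \<in> A. f x \<in> U i}" for i
  have V: "bounded (V i)" "k * diameter (V i) \<le> diameter (U i)" for i
    using expanding_map_bounded_diameter[of k "U i" f "V i"] \<open>k > 0\<close> bounded expand
    by (auto simp: V_def)
  have "diameter (V i) \<le> \<delta>" for i
    using V(2)[of i] bounded \<open>k > 0\<close> by (meson mult_le_cancel_left_pos order_trans)
  moreover have "A \<subseteq> (\<Union>i. V i)"
    using cover by (auto simp: V_def)
  ultimately have "hausdorff_pre s \<delta> A \<le> (\<Sum>i. hcontrib s (V i))"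
    unfolding hausdorff_pre_def using V(1) by (intro INF_lower) auto
  then have "ennreal (k powr s) * hausdorff_pre s \<delta> A \<le> (\<Sum>i. ennreal (k powr s) * hcontrib s (V i))"
    by (simp add: mult_left_mono)
  also have "\<dots> \<le> (\<Sum>i. hcontrib s (U i))"
    by (intro suminf_le hcontrib_scaled_le[OF \<open>k > 0\<close> \<open>s \<ge> 0\<close> V(1) _ V(2)]) (auto simp: V_def)
  finally show "ennreal (k powr s) * hausdorff_pre s \<delta> A \<le> (\<Sum>i. hcontrib s (U i))" .
qed

lemma hausdorff_outer_image_ge:
  fixes f :: "'a::metric_space \<Rightarrow> 'b::metric_space"
  assumes "k > 0" "s \<ge> 0"
    and "\<And>x y. x \<in> A \<Longrightarrow> y \<in> A \<Longrightarrow> k * dist x y \<le> dist (f x) (f y)"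
  shows "ennreal (k powr s) * hausdorff_outer s A \<le> hausdorff_outer s (f ` A)"
  unfolding hausdorff_outer_def SUP_mult_left_ennreal
proof (rule SUP_least)
  fix \<delta> :: real assume "\<delta> \<in> {0<..}"
  then have "k * \<delta> \<in> {0<..}" using \<open>k > 0\<close> by simp
  then show "ennreal (k powr s) * hausdorff_pre s \<delta> A \<le> (SUP \<delta> \<in> {0<..}. hausdorff_pre s \<delta> (f ` A))"
    using hausdorff_pre_image_ge[OF assms] by (blast intro: SUP_upper2)
qed

lemma inner_quotients_lower_bound:
  fixes P Q N a b R :: real
  assumes "R > 0" "R \<le> a" "R \<le> b" "N \<ge> 0"
    and P: "b\<^sup>2 \<le> a\<^sup>2 + 2 * P + N" and Q: "a\<^sup>2 \<le> b\<^sup>2 - 2 * Q + N"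
  shows "- N / R \<le> P / a - Q / b"
proof -
  have "a > 0" "b > 0" using assms by auto
  have "0 \<le> (b + a) * (b - a)\<^sup>2 / (2 * a * b)" "N / (2 * a) \<le> N / (2 * R)" "N / (2 * b) \<le> N / (2 * R)"
    using assms \<open>a > 0\<close> \<open>b > 0\<close> by (auto intro: divide_left_mono)
  then have "- N / R \<le> (b + a) * (b - a)\<^sup>2 / (2 * a * b) - N / (2 * a) - N / (2 * b)"
    by simp
  also have "\<dots> = (b\<^sup>2 - a\<^sup>2 - N) / (2 * a) - (b\<^sup>2 - a\<^sup>2 + N) / (2 * b)"
    using \<open>a > 0\<close> \<open>b > 0\<close> by (simp add: field_simps power2_eq_square)
  also have "\<dots> \<le> P / a - Q / b"
  proof -
    have "(b\<^sup>2 - a\<^sup>2 - N) / (2 * a) \<le> P / a" "Q / b \<le> (b\<^sup>2 - a\<^sup>2 + N) / (2 * b)"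
      using P Q \<open>a > 0\<close> \<open>b > 0\<close> by (simp_all add: divide_simps)
    then show ?thesis by linarith
  qed
  finally show ?thesis .
qed

lemma dist_step_toward_nearest_ge:
  fixes x y p q :: "'a::real_inner"
  assumes "R > 0" "\<Delta> \<ge> 0" "R \<le> dist x p" "R \<le> dist y q"
    and nearest_x: "dist x p \<le> dist x q" and nearest_y: "dist y q \<le> dist y p"
  shows "(R - \<Delta>) / R * dist x y
    \<le> dist (x + (\<Delta> / dist x p) *\<^sub>R (p - x)) (y + (\<Delta> / dist y q) *\<^sub>R (q - y))"
proof -
  define a b u v w where "a = dist x p" "b = dist y q" "u = p - x" "v = q - y" "w = x - y"
  define w' where "w' = w + (\<Delta> / a) *\<^sub>R u - (\<Delta> / b) *\<^sub>R v"
  have "a \<ge> 0" "b \<ge> 0" by (simp_all add: a_b_u_v_w_def)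
  have "b\<^sup>2 \<le> (norm (w + u))\<^sup>2"
    using nearest_y \<open>b \<ge> 0\<close> by (intro power_mono) (simp_all add: a_b_u_v_w_def dist_norm norm_minus_commute)
  also have "\<dots> = a\<^sup>2 + 2 * inner w u + inner w w"
    by (simp add: a_b_u_v_w_def dist_norm power2_norm_eq_inner inner_commute norm_minus_commute algebra_simps)
  finally have P: "b\<^sup>2 \<le> a\<^sup>2 + 2 * inner w u + inner w w" .
  have "a\<^sup>2 \<le> (norm (w - v))\<^sup>2"
    using nearest_x \<open>a \<ge> 0\<close> by (intro power_mono) (simp_all add: a_b_u_v_w_def dist_norm)
  also have "\<dots> = b\<^sup>2 - 2 * inner w v + inner w w"
    by (simp add: a_b_u_v_w_def dist_norm power2_norm_eq_inner inner_commute norm_minus_commute algebra_simps)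
  finally have Q: "a\<^sup>2 \<le> b\<^sup>2 - 2 * inner w v + inner w w" .
  have "(R - \<Delta>) / R * (norm w)\<^sup>2 = inner w w - \<Delta> * (inner w w / R)"
    using \<open>R > 0\<close> by (simp add: power2_norm_eq_inner field_simps)
  also have "\<dots> \<le> inner w w + \<Delta> * (inner w u / a - inner w v / b)"
    using mult_left_mono[OF inner_quotients_lower_bound[OF assms(1) _ _ _ P Q] assms(2)] assms(3,4)
    by (simp add: a_b_u_v_w_def)
  also have "\<dots> = inner w' w"
    by (simp add: w'_def inner_commute algebra_simps)
  also have "\<dots> \<le> norm w' * norm w"
    by (rule norm_cauchy_schwarz)
  finally have "(R - \<Delta>) / R * norm w * norm w \<le> norm w' * norm w"
    by (simp add: power2_eq_square mult.assoc)
  then have "(R - \<Delta>) / R * norm w \<le> norm w'"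
    by (cases "w = 0") (auto intro: mult_right_le_imp_le)
  moreover have "w' = (x + (\<Delta> / a) *\<^sub>R u) - (y + (\<Delta> / b) *\<^sub>R v)"
    by (simp add: w'_def a_b_u_v_w_def algebra_simps)
  ultimately show ?thesis
    by (simp add: a_b_u_v_w_def dist_norm)
qed

lemma infdist_le_dist_closure:
  fixes H :: "'a::metric_space set"
  assumes "H \<noteq> {}" "z \<in> closure H"
  shows "infdist x H \<le> dist x z"
  using infdist_triangle[of x H z] in_closure_iff_infdist_zero[OF assms(1)] assms(2) by simp

lemma T_map_eq_step_toward_nearest:
  assumes "dist x (\<pi> x) = infdist x H" "\<Delta> \<le> infdist x H"
  shows "T_map \<pi> H \<Delta> x = x + (\<Delta> / dist x (\<pi> x)) *\<^sub>R (\<pi> x - x)"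
proof (cases "\<Delta> < infdist x H")
  case True
  then show ?thesis by (simp add: T_map_def dist_norm norm_minus_commute)
next
  case False
  then have "dist x (\<pi> x) = \<Delta>" using assms by simp
  then show ?thesis
    using False by (cases "\<Delta> = 0") (simp_all add: T_map_def)
qed

lemma T_map_expands_dist:
  fixes H A :: "'a::real_inner set"
  assumes "H \<noteq> {}"
    and nearest: "\<And>x. \<pi> x \<in> closure H \<and> dist x (\<pi> x) = infdist x H"
    and "R > 0" "setdist_HA H A \<ge> R" "\<Delta> \<le> R" "\<Delta> \<ge> 0" "x \<in> A" "y \<in> A"
  shows "(R - \<Delta>) / R * dist x y \<le> dist (T_map \<pi> H \<Delta> x) (T_map \<pi> H \<Delta> y)"
proof -
  have far: "R \<le> dist z (\<pi> z)" if "z \<in> A" for z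
  proof -
    have "setdist_HA H A \<le> infdist z H"
      unfolding setdist_HA_def using that
      by (intro cINF_lower bdd_belowI[of _ 0]) (auto simp: infdist_nonneg)
    then show ?thesis using nearest assms(4) by simp
  qed
  have T: "T_map \<pi> H \<Delta> z = z + (\<Delta> / dist z (\<pi> z)) *\<^sub>R (\<pi> z - z)" if "z \<in> A" for z
    using far[OF that] nearest[of z] \<open>\<Delta> \<le> R\<close> by (intro T_map_eq_step_toward_nearest) auto
  have "dist z (\<pi> z) \<le> dist z (\<pi> z')" for z z'
    using nearest infdist_le_dist_closure[OF \<open>H \<noteq> {}\<close>] by metis
  then show ?thesis
    unfolding T[OF \<open>x \<in> A\<close>] T[OF \<open>y \<in> A\<close>]
    using dist_step_toward_nearest_ge[OF \<open>R > 0\<close> \<open>\<Delta> \<ge> 0\<close> far far] \<open>x \<in> A\<close> \<open>y \<in> A\<close>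
    by blast
qed

theorem proposition2:
  fixes H A :: "'a::euclidean_space set" and \<pi> :: "'a \<Rightarrow> 'a"
    and R \<Delta> s :: real
  assumes "H \<noteq> {}" and "A \<noteq> {}"
    and "\<And>x. \<pi> x \<in> closure H \<and> dist x (\<pi> x) = infdist x H"
    and "R > 0" and "setdist_HA H A \<ge> R" and "R \<ge> \<Delta>" and "\<Delta> \<ge> 0"
    and "0 \<le> s" and "s \<le> real DIM('a)"
  shows "hausdorff_outer s (T_map \<pi> H \<Delta> ` A)
           \<ge> ennreal (((R - \<Delta>) / R) powr s) * hausdorff_outer s A"
proof (cases "\<Delta> = R")
  case False
  then have "(R - \<Delta>) / R > 0" using assms by simp
  then show ?thesis
    using hausdorff_outer_image_ge T_map_expands_dist[OF assms(1,3-7)] \<open>0 \<le> s\<close> by blast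
qed simp \<comment> \<open>0 powr s = 0 even for s = 0: this is the convention 0^0 := 0\<close>

end
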